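(* Let $k\in L^1([0,\infty);(0,\infty))\cap C([0,\infty);(0,\infty))$ with $\lambda(t):=\int_t^\infty k(s)\,ds=L(t)t^{-\alpha}$ for some $\alpha>1$ and some $L$ slowly varying at infinity, and let $a=-\int_0^\infty k(s)\,ds$. Then $\int_0^\infty sk(s)\,ds<\infty$ and the resolvent $r$ (unique continuous solution of $r'(t)=ar(t)+\int_0^tk(t-s)r(s)\,ds$, $r(0)=1$) satisfies $$\lim_{t\to\infty}r(t)=\Big(1+\int_0^\infty sk(s)\,ds\Big)^{-1}.$$
   Context: $L:[0,\infty)\to(0,\infty)$ is slowly varying at infinity if $L(xt)/L(t)\to1$ as $t\to\infty$ for every $x>0$. *)

theory Defs
  imports "HOL-Analysis.Analysis"
begin

definition slowly_varying :: "(real \<Rightarrow> real) \<Rightarrow> bool" where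
  "slowly_varying L \<longleftrightarrow> (\<forall>t\<ge>0. L t > 0) \<and>
     (\<forall>x>0. ((\<lambda>t. L (x * t) / L t) \<longlongrightarrow> 1) at_top)"

end

theory Submission
  imports Defs
begin

text \<open>
  Proof idea.
  (1) Regular variation gives \<open>\<lambda>(2t) \<le> 2^(-\<gamma>) \<lambda>(t)\<close> for large \<open>t\<close>, with \<open>\<gamma> = (1 + \<alpha>)/2 > 1\<close>,
  hence the power bound \<open>\<lambda>(t) = O(t^(-\<gamma>))\<close>.  So \<open>\<lambda>\<close> is integrable, \<open>t \<lambda>(t) \<rightarrow> 0\<close>, and an
  integration by parts gives \<open>\<integral>\<^sub>0^\<infinity> s k(s) ds = \<integral>\<^sub>0^\<infinity> \<lambda> =: \<mu>\<close>.
  (2) Differentiating the convolution \<open>\<lambda> * r\<close> shows that \<open>r\<close> solves the renewal equation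
  \<open>r(t) + \<integral>\<^sub>0^t \<lambda>(t - s) r(s) ds = 1\<close>; together with a first-zero argument this gives \<open>0 < r \<le> 1\<close>.
  (3) For \<open>\<sigma> = \<plusminus>1\<close> let \<open>M\<close> be the limit superior of \<open>\<sigma> r\<close>.  At late times where \<open>\<sigma> r\<close> is
  almost maximal and its slope is at least \<open>-2\<delta>\<close>, the slope formula
  \<open>r'(t) = -\<lambda>(t) r(t) + \<integral>\<^sub>0^t k(v) (r(t - v) - r(t)) dv\<close> and \<open>k \<ge> c > 0\<close> on \<open>[0, S]\<close> show
  that \<open>\<sigma> r(t)\<close> exceeds its \<open>\<lambda>\<close>-weighted past over \<open>[t - S, t]\<close> by \<open>O(\<delta>)\<close>.  Inserted
  into the renewal equation this yields \<open>M (1 + \<mu>) \<le> \<sigma>\<close>; the cases \<open>\<sigma> = 1\<close> and \<open>\<sigma> = -1\<close>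
  together give \<open>r(t) \<rightarrow> 1 / (1 + \<mu>)\<close>.
\<close>

lemma integral_reflect_Icc:
  fixes f :: "real \<Rightarrow> real"
  shows "integral {0..t} (\<lambda>s. f (t - s)) = integral {0..t} f"
proof -
  have "integral {0..t} f = integral {0 + -t..t + -t} (\<lambda>x. f (-x))"
    using Henstock_Kurzweil_Integration.integral_reflect_real[of t 0 f] by simp
  also have "\<dots> = integral {0..t} ((\<lambda>x. f (-x)) \<circ> (+) (-t))"
    by (rule integral_shift_Icc_real[symmetric])
  finally show ?thesis by (simp add: o_def)
qed

lemma continuous_on_reflect_Icc:
  fixes f :: "real \<Rightarrow> real"
  assumes "continuous_on {0..} f"
  shows "continuous_on {0..t} (\<lambda>s. f (t - s))"
  by (intro continuous_on_compose2[OF assms] continuous_intros) auto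

lemma nonneg_integrable_on_Ici:
  fixes f :: "real \<Rightarrow> real"
  assumes "f integrable_on {a..}" "\<And>x. x \<ge> a \<Longrightarrow> f x \<ge> 0" "a \<le> t"
  shows "f integrable_on {t..}"
proof -
  have "f absolutely_integrable_on {a..}"
    by (rule nonnegative_absolutely_integrable_1) (use assms in auto)
  hence "f absolutely_integrable_on {t..}"
    by (rule set_integrable_subset) (use assms in auto)
  thus ?thesis using absolutely_integrable_on_def by blast
qed

lemma integral_Ici_split:
  fixes f :: "real \<Rightarrow> real"
  assumes f: "f integrable_on {a..}" "\<And>x. x \<ge> a \<Longrightarrow> f x \<ge> 0" and t: "a \<le> t"
  shows "integral {a..} f = integral {a..t} f + integral {t..} f"
proof -
  have "{a..} = {a..t} \<union> {t..}" "{a..t} \<inter> {t..} = {t}" using t by auto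
  moreover have "f integrable_on {a..t}" by (rule integrable_on_subinterval[OF f(1)]) auto
  ultimately show ?thesis
    using integral_Un[of f "{a..t}" "{t..}"] nonneg_integrable_on_Ici[OF f t] by auto
qed

lemma integral_Icc_tendsto_Ici:
  fixes f :: "real \<Rightarrow> real"
  assumes f: "f integrable_on {a..}" and nonneg: "\<And>x. x \<ge> a \<Longrightarrow> f x \<ge> 0"
  shows "((\<lambda>y. integral {a..y} f) \<longlongrightarrow> integral {a..} f) at_top"
proof -
  define F where "F = (\<lambda>y. integral {a..y} f)"
  have f_Icc: "f integrable_on {a..y}" for y by (rule integrable_on_subinterval[OF f]) auto
  have F_mono: "F x \<le> F y" if "x \<le> y" for x y
    unfolding F_def by (rule integral_subset_le) (use that f_Icc nonneg in auto)
  have F_bdd: "F y \<le> integral {a..} f" for y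
    unfolding F_def by (rule integral_subset_le) (use f_Icc f nonneg in auto)
  define S where "S = Sup (range F)"
  have bdd: "bdd_above (range F)" using F_bdd by (intro bdd_aboveI2)
  have "(F \<longlongrightarrow> S) at_top"
  proof (rule increasing_tendsto)
    show "\<forall>\<^sub>F y in at_top. F y \<le> S"
      unfolding S_def using bdd by (intro always_eventually allI cSup_upper) auto
    fix x assume "x < S"
    then obtain y0 where "x < F y0" unfolding S_def using less_cSupD[of "range F"] by auto
    then show "\<forall>\<^sub>F y in at_top. x < F y"
      using F_mono by (auto simp: eventually_at_top_linorder intro: less_le_trans)
  qed
  hence "(f has_integral S) {a..}"
    by (intro has_integral_to_inf f_Icc nonneg) (auto simp: F_def)
  hence "S = integral {a..} f" by (rule integral_unique[symmetric])
  with \<open>(F \<longlongrightarrow> S) at_top\<close> show ?thesis by (simp add: F_def)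
qed

lemma integral_mult_add_const:
  fixes w f :: "real \<Rightarrow> real"
  assumes "(\<lambda>v. w v * f v) integrable_on A" "w integrable_on A"
  shows "integral A (\<lambda>v. w v * (f v + c)) = integral A (\<lambda>v. w v * f v) + c * integral A w"
proof -
  have "integral A (\<lambda>v. w v * (f v + c)) = integral A (\<lambda>v. w v * f v + c * w v)"
    by (simp add: algebra_simps)
  also have "\<dots> = integral A (\<lambda>v. w v * f v) + integral A (\<lambda>v. c * w v)"
    using assms(1) integrable_on_cmult_left[OF assms(2), of c] by (simp add: integral_add)
  finally show ?thesis by simp
qed

lemma le_by_vanishing_error:
  fixes a b C :: real
  assumes err: "\<And>\<delta>. \<delta> > 0 \<Longrightarrow> a \<le> b + C * \<delta>" and C: "C \<ge> 0"
  shows "a \<le> b"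
proof (rule field_le_epsilon)
  fix e :: real assume e: "e > 0"
  have "C * (e / (C + 1)) \<le> e"
    using C e by (simp add: field_simps)
  moreover have "a \<le> b + C * (e / (C + 1))" using C e by (intro err) simp
  ultimately show "a \<le> b + e" by linarith
qed

section \<open>Growth bounds, first zeros and approximate maxima\<close>

lemma power_bound_from_doubling:
  fixes f :: "real \<Rightarrow> real" and e B T :: real
  assumes T: "T > 0" and e: "e \<le> 0" and B: "B \<ge> 0"
    and doubling: "\<And>t. t \<ge> T \<Longrightarrow> f (2 * t) \<le> 2 powr e * f t"
    and base: "\<And>t. T \<le> t \<Longrightarrow> t \<le> 2 * T \<Longrightarrow> f t \<le> B"
    and t: "t \<ge> T"
  shows "f t \<le> B * (2 * T) powr (- e) * t powr e"
proof -
  define C where "C = B * (2 * T) powr (- e)"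
  have on_base: "f s \<le> C * s powr e" if "T \<le> s" "s \<le> 2 * T" for s
  proof -
    have "1 = (2 * T) powr (- e) * (2 * T) powr e" using T by (simp add: powr_minus)
    also have "\<dots> \<le> (2 * T) powr (- e) * s powr e"
      using that T e by (intro mult_left_mono powr_mono2') auto
    finally have "B \<le> C * s powr e" using B mult_left_mono[of 1 _ B] by (simp add: C_def mult.assoc)
    with base[OF that] show ?thesis by linarith
  qed
  have "f s \<le> C * s powr e" if "T \<le> s" "s \<le> 2 ^ n * (2 * T)" for n :: nat and s
    using that
  proof (induction n arbitrary: s)
    case 0
    then show ?case by (intro on_base) auto
  next
    case (Suc n)
    show ?case
    proof (cases "s \<le> 2 * T")
      case True
      then show ?thesis using Suc.prems by (intro on_base) auto
    next
      case False
      have "f s = f (2 * (s / 2))" by simp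
      also have "\<dots> \<le> 2 powr e * f (s / 2)" using False by (intro doubling) auto
      also have "\<dots> \<le> 2 powr e * (C * (s / 2) powr e)"
        using False Suc.prems by (intro mult_left_mono Suc.IH) auto
      also have "\<dots> = C * s powr e" using False T by (simp add: powr_divide)
      finally show ?thesis .
    qed
  qed
  moreover obtain n :: nat where "t / (2 * T) < 2 ^ n" using real_arch_pow[of 2 "t / (2 * T)"] by auto
  hence "t \<le> 2 ^ n * (2 * T)" using T by (simp add: field_simps)
  ultimately show ?thesis using t by (simp add: C_def)
qed

lemma first_zero:
  fixes f :: "real \<Rightarrow> real"
  assumes f: "continuous_on {0..} f" and f0: "f 0 > 0" and t: "t \<ge> 0" "f t \<le> 0"
  obtains t1 where "t1 > 0" "f t1 = 0" "\<And>s. 0 \<le> s \<Longrightarrow> s < t1 \<Longrightarrow> f s > 0"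
proof -
  define Z where "Z = {0..} \<inter> f -` {..0}"
  have "closed Z" unfolding Z_def by (rule continuous_closed_preimage[OF f]) auto
  moreover have "Z \<noteq> {}" "bdd_below Z" using t by (auto simp: Z_def intro!: bdd_belowI[of _ 0])
  ultimately have t1Z: "Inf Z \<in> Z" by (intro closed_contains_Inf)
  define t1 where "t1 = Inf Z"
  have before: "f s > 0" if "0 \<le> s" "s < t1" for s
  proof (rule ccontr)
    assume "\<not> f s > 0"
    hence "t1 \<le> s" unfolding t1_def using that \<open>bdd_below Z\<close> by (intro cInf_lower) (auto simp: Z_def)
    with that show False by simp
  qed
  have t1: "t1 \<ge> 0" "f t1 \<le> 0" using t1Z by (auto simp: Z_def t1_def)
  hence "t1 > 0" using f0 by (cases "t1 = 0") auto
  moreover have "f t1 = 0"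
  proof (rule ccontr)
    assume "f t1 \<noteq> 0"
    have "continuous_on {0..t1} f" by (rule continuous_on_subset[OF f]) auto
    then obtain s where "0 \<le> s" "s \<le> t1" "f s = 0"
      using IVT2'[of f t1 0 0] f0 t1 by auto
    with before[of s] \<open>f t1 \<noteq> 0\<close> show False by (cases "s = t1") auto
  qed
  ultimately show ?thesis using before that by blast
qed

text \<open>If \<open>f \<le> M + \<delta>\<close> eventually and \<open>f > M - \<delta>/2\<close> arbitrarily late, then arbitrarily late there
  are such points where additionally \<open>f\<close> has slope at least \<open>-2\<delta>\<close>: maximise \<open>f(s) + 2\<delta> s\<close>
  over a unit interval ending at a point where \<open>f > M - \<delta>/2\<close>.\<close>
lemma approximate_maximum:
  fixes f D :: "real \<Rightarrow> real"
  assumes deriv: "\<And>t. t \<ge> 0 \<Longrightarrow> (f has_real_derivative D t) (at t within {0..})"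
    and T0: "T0 \<ge> 0" and above: "\<And>t. t \<ge> T0 \<Longrightarrow> f t \<le> M + \<delta>" and \<delta>: "\<delta> > 0"
    and often: "\<And>T. \<exists>t\<ge>T. f t > M - \<delta> / 2"
  shows "\<exists>t\<ge>T. f t > M - \<delta> / 2 \<and> D t \<ge> - 2 * \<delta>"
proof -
  obtain t0 where t0: "t0 \<ge> max T T0 + 1" "f t0 > M - \<delta> / 2" using often by blast
  define \<psi> where "\<psi> s = f s + 2 * \<delta> * s" for s
  have f_cont: "continuous_on {0..} f"
    unfolding continuous_on_eq_continuous_within using deriv DERIV_continuous by (metis atLeast_iff)
  have "continuous_on {t0 - 1..t0} \<psi>"
    unfolding \<psi>_def using T0 t0 by (intro continuous_intros continuous_on_subset[OF f_cont]) auto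
  then obtain x where x: "x \<in> {t0 - 1..t0}" and x_max: "\<And>y. y \<in> {t0 - 1..t0} \<Longrightarrow> \<psi> y \<le> \<psi> x"
    using continuous_attains_sup[of "{t0 - 1..t0}" \<psi>] by auto
  have "f (t0 - 1) \<le> M + \<delta>" using t0 by (intro above) auto
  hence "\<psi> (t0 - 1) < \<psi> t0" using t0 \<delta> by (simp add: \<psi>_def algebra_simps)
  with x x_max[of t0] have x_gt: "x > t0 - 1" by (cases "x = t0 - 1") auto
  have "\<psi> t0 \<le> \<psi> x" using x_max[of t0] t0 by auto
  moreover have "2 * \<delta> * (x - t0) \<le> 0" using x \<delta> by (simp add: mult_nonneg_nonpos)
  ultimately have fx: "f x > M - \<delta> / 2" using t0 by (simp add: \<psi>_def algebra_simps)
  have "D x \<ge> - 2 * \<delta>"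
  proof (rule ccontr)
    assume "\<not> D x \<ge> - 2 * \<delta>"
    have "x \<ge> 0" using x_gt t0 T0 by auto
    hence "(\<psi> has_real_derivative D x + 2 * \<delta> * 1) (at x within {0..})"
      unfolding \<psi>_def by (intro DERIV_add deriv DERIV_cmult DERIV_ident)
    with \<open>\<not> D x \<ge> - 2 * \<delta>\<close> obtain d where d: "d > 0"
      "\<And>h. h > 0 \<Longrightarrow> x - h \<in> {0..} \<Longrightarrow> h < d \<Longrightarrow> \<psi> x < \<psi> (x - h)"
      using has_real_derivative_neg_dec_left[of \<psi> "D x + 2 * \<delta> * 1" x "{0..}"] by auto
    define h where "h = min d (x - (t0 - 1)) / 2"
    have h: "h > 0" "h < d" "x - h \<in> {t0 - 1..t0}" using d x x_gt by (auto simp: h_def min_def field_simps)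
    hence "x - h \<in> {0..}" using t0 T0 by auto
    from d(2)[OF h(1) this h(2)] x_max[OF h(3)] show False by simp
  qed
  with fx x t0 show ?thesis by (intro exI[of _ x]) auto
qed

definition limsup_at_top :: "(real \<Rightarrow> real) \<Rightarrow> real \<Rightarrow> bool" where
  "limsup_at_top f M \<longleftrightarrow>
     (\<forall>\<delta>>0. \<exists>T\<ge>0. \<forall>t\<ge>T. f t \<le> M + \<delta>) \<and> (\<forall>\<delta>>0. \<forall>T. \<exists>t\<ge>T. f t > M - \<delta>)"

lemma bounded_has_limsup_at_top:
  fixes f :: "real \<Rightarrow> real"
  assumes B: "\<And>t. t \<ge> 0 \<Longrightarrow> \<bar>f t\<bar> \<le> B"
  shows "\<exists>M. limsup_at_top f M"
proof -
  define U where "U T = Sup (f ` {max 0 T..})" for T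
  have bdd: "bdd_above (f ` {max 0 T..})" for T
    using B by (auto intro!: bdd_aboveI[of _ B] simp: abs_le_iff)
  have f_le_U: "f t \<le> U T" if "t \<ge> max 0 T" for t T
    unfolding U_def by (rule cSup_upper[OF _ bdd]) (use that in auto)
  have "f (max 0 T) \<le> U T" "\<bar>f (max 0 T)\<bar> \<le> B" for T by (auto intro: f_le_U B)
  hence "bdd_below (range U)" by (intro bdd_belowI2[of _ "- B"]) (smt (verit))
  define M where "M = Inf (range U)"
  have "\<exists>T\<ge>0. \<forall>t\<ge>T. f t \<le> M + \<delta>" if \<delta>: "\<delta> > 0" for \<delta>
  proof -
    obtain T where "U T < M + \<delta>"
      using cInf_lessD[of "range U" "M + \<delta>"] \<delta> by (auto simp: M_def)
    thus ?thesis using f_le_U[where T=T] by (intro exI[of _ "max 0 T"]) fastforce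
  qed
  moreover have "\<exists>t\<ge>T. f t > M - \<delta>" if "\<delta> > 0" for \<delta> T
  proof -
    have "M \<le> U T" unfolding M_def by (rule cInf_lower[OF _ \<open>bdd_below (range U)\<close>]) auto
    hence "M - \<delta> < Sup (f ` {max 0 T..})" using that by (simp add: U_def)
    then obtain y where "y \<in> f ` {max 0 T..}" "M - \<delta> < y"
      using less_cSupD[of "f ` {max 0 T..}"] by auto
    thus ?thesis by auto
  qed
  ultimately show ?thesis unfolding limsup_at_top_def by blast
qed

lemma tendsto_by_limsup_bounds:
  fixes f :: "real \<Rightarrow> real"
  assumes "limsup_at_top f M" "limsup_at_top (\<lambda>t. - f t) M'" "M \<le> l" "M' \<le> - l"
  shows "(f \<longlongrightarrow> l) at_top"
proof (rule order_tendstoI)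
  fix y assume "y < l"
  then obtain T where T: "\<forall>t\<ge>T. - f t \<le> M' + (l - y) / 2"
    using assms(2) unfolding limsup_at_top_def by (meson half_gt_zero diff_gt_0_iff_gt)
  have "y < f t" if "t \<ge> T" for t using T[rule_format, OF that] assms(4) \<open>y < l\<close> by (simp add: field_simps)
  thus "\<forall>\<^sub>F t in at_top. y < f t" unfolding eventually_at_top_linorder by blast
next
  fix y assume "y > l"
  then obtain T where T: "\<forall>t\<ge>T. f t \<le> M + (y - l) / 2"
    using assms(1) unfolding limsup_at_top_def by (meson half_gt_zero diff_gt_0_iff_gt)
  have "f t < y" if "t \<ge> T" for t using T[rule_format, OF that] assms(3) \<open>y > l\<close> by (simp add: field_simps)
  thus "\<forall>\<^sub>F t in at_top. f t < y" unfolding eventually_at_top_linorder by blast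
qed

section \<open>Differentiating convolution integrals\<close>

lemma diagonal_has_real_derivative:
  fixes G :: "real \<Rightarrow> real \<Rightarrow> real" and X :: "real set"
  assumes G1: "((\<lambda>\<tau>. G \<tau> t) has_real_derivative G1) (at t within X)"
    and G2: "\<And>\<tau> x. \<tau> \<in> X \<Longrightarrow> x \<in> X \<Longrightarrow> (G \<tau> has_real_derivative G2 \<tau> x) (at x within X)"
    and G2_cont: "continuous_on (X \<times> X) (\<lambda>(\<tau>, x). G2 \<tau> x)"
    and t: "t \<in> X" and X: "convex X"
  shows "((\<lambda>s. G s s) has_real_derivative G1 + G2 t t) (at t within X)"
proof -
  have "continuous_on (X \<times> X) (\<lambda>(\<tau>, x). blinfun_mult_right (G2 \<tau> x))"
    using bounded_linear.continuous_on[OF bounded_linear_blinfun_mult_right G2_cont]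
    by (simp add: case_prod_beta)
  hence "((\<lambda>(\<tau>, x). G \<tau> x) has_derivative (\<lambda>(d\<tau>, dx). G1 * d\<tau> + blinfun_mult_right (G2 t t) dx))
           (at (t, t) within X \<times> X)"
    using G1 G2 t X
    by (intro has_derivative_partialsI[where fy="\<lambda>\<tau> x. blinfun_mult_right (G2 \<tau> x)"])
       (auto simp: has_field_derivative_def continuous_on_eq_continuous_within
          has_field_derivative_eq_has_derivative_blinfun[symmetric])
  hence "((\<lambda>(\<tau>, x). G \<tau> x) has_derivative (\<lambda>(d\<tau>, dx). G1 * d\<tau> + blinfun_mult_right (G2 t t) dx))
           (at (t, t) within (\<lambda>s. (s, s)) ` X)"
    by (rule has_derivative_subset) auto
  moreover have "((\<lambda>s. (s, s)) has_derivative (\<lambda>h. (h, h))) (at t within X)"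
    by (intro derivative_eq_intros) auto
  ultimately have "((\<lambda>s. G s s) has_derivative (\<lambda>h. G1 * h + G2 t t * h)) (at t within X)"
    using has_derivative_in_compose[of "\<lambda>s. (s, s)"] by fastforce
  moreover have "(\<lambda>h. G1 * h + G2 t t * h) = (*) (G1 + G2 t t)" by (rule ext) (simp add: algebra_simps)
  ultimately show ?thesis by (simp add: has_field_derivative_def)
qed

lemma continuous_on_shift_product:
  fixes \<phi> g :: "real \<Rightarrow> real"
  assumes \<phi>: "continuous_on {-B..B} \<phi>" and g: "continuous_on {0..B} g"
  shows "continuous_on ({0..B} \<times> {0..B}) (\<lambda>(\<tau>, s). \<phi> (\<tau> - s) * g s)"
proof -
  have "(\<lambda>p. fst p - snd p) ` ({0..B} \<times> {0..B}) \<subseteq> {-B..B}" by auto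
  hence "continuous_on ({0..B} \<times> {0..B}) (\<lambda>p. \<phi> (fst p - snd p) * g (snd p))"
    by (intro continuous_intros continuous_on_compose2[OF \<phi>] continuous_on_compose2[OF g]) auto
  thus ?thesis by (simp add: case_prod_beta)
qed

lemma shifted_integral_has_real_derivative:
  fixes h h' g :: "real \<Rightarrow> real"
  assumes h: "\<And>z. z \<in> {-B..B} \<Longrightarrow> (h has_real_derivative h' z) (at z within {-B..B})"
    and h'_cont: "continuous_on {-B..B} h'"
    and g: "continuous_on {0..B} g" and t: "t \<in> {0..B}"
  shows "((\<lambda>\<tau>. integral {0..t} (\<lambda>s. h (\<tau> - s) * g s)) has_real_derivative
           integral {0..t} (\<lambda>s. h' (t - s) * g s)) (at t within {0..B})"
proof -
  have h_cont: "continuous_on {-B..B} h"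
    using h DERIV_continuous continuous_on_eq_continuous_within by blast
  have "((\<lambda>\<tau>. integral (cbox 0 t) (\<lambda>s. h (\<tau> - s) * g s)) has_real_derivative
          integral (cbox 0 t) (\<lambda>s. h' (t - s) * g s)) (at t within {0..B})"
  proof (rule leibniz_rule_field_derivative)
    fix \<tau> s assume \<tau>: "\<tau> \<in> {0..B}" and s: "s \<in> cbox 0 t"
    have "(h has_real_derivative h' (\<tau> - s)) (at (\<tau> - s) within (\<lambda>\<tau>. \<tau> - s) ` {0..B})"
      by (rule has_field_derivative_subset[OF h]) (use \<tau> s t in auto)
    moreover have "((\<lambda>\<tau>. \<tau> - s) has_real_derivative 1) (at \<tau> within {0..B})"
      by (intro derivative_eq_intros) auto
    ultimately have "((\<lambda>\<tau>. h (\<tau> - s)) has_real_derivative h' (\<tau> - s)) (at \<tau> within {0..B})"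
      using DERIV_image_chain by (fastforce simp: o_def)
    then show "((\<lambda>\<tau>. h (\<tau> - s) * g s) has_real_derivative h' (\<tau> - s) * g s) (at \<tau> within {0..B})"
      by (auto intro!: derivative_eq_intros)
  next
    have "{0..B} \<times> cbox 0 t \<subseteq> {0..B} \<times> {0..B}" using t by (auto simp: cbox_interval)
    with continuous_on_shift_product[OF h'_cont g]
    show "continuous_on ({0..B} \<times> cbox 0 t) (\<lambda>(\<tau>, s). h' (\<tau> - s) * g s)"
      by (rule continuous_on_subset)
  next
    fix \<tau> assume "\<tau> \<in> {0..B}"
    hence "continuous_on (cbox 0 t) (\<lambda>s. h (\<tau> - s) * g s)"
      using t by (intro continuous_intros continuous_on_compose2[OF h_cont] continuous_on_subset[OF g])
         auto
    thus "(\<lambda>s. h (\<tau> - s) * g s) integrable_on cbox 0 t" by (rule integrable_continuous)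
  qed (use t in auto)
  thus ?thesis by simp
qed

lemma convolution_has_real_derivative:
  fixes h h' g :: "real \<Rightarrow> real"
  assumes h: "\<And>z. z \<in> {-B..B} \<Longrightarrow> (h has_real_derivative h' z) (at z within {-B..B})"
    and h'_cont: "continuous_on {-B..B} h'"
    and g: "continuous_on {0..B} g" and t: "t \<in> {0..B}"
  shows "((\<lambda>\<tau>. integral {0..\<tau>} (\<lambda>s. h (\<tau> - s) * g s)) has_real_derivative
           h 0 * g t + integral {0..t} (\<lambda>s. h' (t - s) * g s)) (at t within {0..B})"
proof -
  have h_cont: "continuous_on {-B..B} h"
    using h DERIV_continuous continuous_on_eq_continuous_within by blast
  have upper_limit: "((\<lambda>x. integral {0..x} (\<lambda>s. h (\<tau> - s) * g s)) has_real_derivative h (\<tau> - x) * g x)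
                       (at x within {0..B})" if "\<tau> \<in> {0..B}" "x \<in> {0..B}" for \<tau> x
    using that by (intro integral_has_real_derivative continuous_intros
                     continuous_on_compose2[OF h_cont] g) auto
  from diagonal_has_real_derivative[OF shifted_integral_has_real_derivative[OF h h'_cont g t]
         upper_limit continuous_on_shift_product[OF h_cont g] t]
  show ?thesis by (simp add: add.commute)
qed

text \<open>An antiderivative of \<open>f\<close> on \<open>[0, \<infinity>)\<close>, extended to \<open>[-B, B]\<close> by continuing \<open>f\<close> constantly
  to the left, so that it is differentiable on a neighbourhood of every point of \<open>[0, B]\<close>.\<close>
lemma antiderivative_on_symmetric_interval:
  fixes f :: "real \<Rightarrow> real"
  assumes f: "continuous_on {0..} f" and B: "B \<ge> 0"
  obtains F where "\<And>z. z \<in> {-B..B} \<Longrightarrow> (F has_real_derivative f (max 0 z)) (at z within {-B..B})"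
    and "\<And>z. z \<ge> 0 \<Longrightarrow> F z = integral {0..z} f"
proof
  define f0 where "f0 z = f (max 0 z)" for z
  have "continuous_on UNIV (\<lambda>z::real. max 0 z)" by (intro continuous_intros)
  hence f0_cont: "continuous_on UNIV f0"
    unfolding f0_def by (rule continuous_on_compose2[OF f]) auto
  show "((\<lambda>z. integral {-B..z} f0 - integral {-B..0} f0) has_real_derivative f (max 0 z))
          (at z within {-B..B})" if "z \<in> {-B..B}" for z
    using integral_has_real_derivative[OF continuous_on_subset[OF f0_cont] that]
    by (auto simp: f0_def intro!: derivative_eq_intros)
  show "integral {-B..z} f0 - integral {-B..0} f0 = integral {0..z} f" if "z \<ge> 0" for z
  proof -
    have "integral {-B..0} f0 + integral {0..z} f0 = integral {-B..z} f0"
      using B that by (intro Henstock_Kurzweil_Integration.integral_combine integrable_continuous_interval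
                         continuous_on_subset[OF f0_cont]) auto
    moreover have "integral {0..z} f0 = integral {0..z} f" by (rule integral_cong) (simp add: f0_def)
    ultimately show ?thesis by simp
  qed
qed

section \<open>The kernel and its tail\<close>

locale kernel =
  fixes k :: "real \<Rightarrow> real"
  assumes k_cont: "continuous_on {0..} k"
    and k_pos: "\<And>t. t \<ge> 0 \<Longrightarrow> k t > 0"
    and k_int: "k integrable_on {0..}"
begin

definition K :: real where "K = integral {0..} k"

definition lam :: "real \<Rightarrow> real" where "lam t = integral {t..} k"

lemma k_nonneg: "t \<ge> 0 \<Longrightarrow> k t \<ge> 0"
  using k_pos by (simp add: less_imp_le)

lemma k_integrable_Icc: "0 \<le> a \<Longrightarrow> k integrable_on {a..b}"
  by (rule integrable_continuous_interval, rule continuous_on_subset[OF k_cont]) auto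

lemma K_split: "t \<ge> 0 \<Longrightarrow> K = integral {0..t} k + lam t"
  unfolding K_def lam_def using integral_Ici_split[OF k_int] k_nonneg by blast

lemma lam_nonneg: "t \<ge> 0 \<Longrightarrow> lam t \<ge> 0"
  unfolding lam_def using nonneg_integrable_on_Ici[OF k_int] k_nonneg
  by (intro integral_nonneg) auto

lemma integral_k_nonneg: "integral {0..t} k \<ge> 0"
  using k_integrable_Icc k_nonneg by (intro integral_nonneg) auto

lemma lam_le_K: "t \<ge> 0 \<Longrightarrow> lam t \<le> K"
  using K_split integral_k_nonneg by force

lemma integral_k_le_K: "t \<ge> 0 \<Longrightarrow> integral {0..t} k \<le> K"
  using K_split lam_nonneg by force

lemma K_nonneg: "K \<ge> 0"
  using lam_le_K lam_nonneg by force

lemma lam_split: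
  assumes "0 \<le> s" "s \<le> t"
  shows "lam s = integral {s..t} k + lam t"
proof -
  have "integral {0..s} k + integral {s..t} k = integral {0..t} k"
    using assms by (intro Henstock_Kurzweil_Integration.integral_combine k_integrable_Icc) auto
  with K_split[of s] K_split[of t] assms show ?thesis by linarith
qed

lemma lam_antimono: "0 \<le> s \<Longrightarrow> s \<le> t \<Longrightarrow> lam t \<le> lam s"
  using lam_split[of s t] k_integrable_Icc k_nonneg by (auto intro!: integral_nonneg)

lemma integral_k_le_lam: "0 \<le> s \<Longrightarrow> s \<le> t \<Longrightarrow> integral {s..t} k \<le> lam s"
  using lam_split[of s t] lam_nonneg[of t] by linarith

lemma lam_has_derivative:
  assumes t: "t \<ge> 0"
  shows "(lam has_real_derivative - k t) (at t within {0..})"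
proof -
  have "((\<lambda>x. integral {0..x} k) has_real_derivative k t) (at t within {0..t + 1})"
    by (rule integral_has_real_derivative) (auto intro: continuous_on_subset[OF k_cont] simp: t)
  hence "((\<lambda>x. integral {0..x} k) has_real_derivative k t) (at t within {0..})"
    by (subst at_within_nhd[where S="{..<t + 1}"]) auto
  hence "((\<lambda>x. K - integral {0..x} k) has_real_derivative - k t) (at t within {0..})"
    by (auto intro!: derivative_eq_intros)
  thus ?thesis
    by (rule has_field_derivative_transform_within[where d=1]) (use t K_split in auto)
qed

lemma lam_cont: "continuous_on {0..} lam"
  unfolding continuous_on_eq_continuous_within
  using lam_has_derivative DERIV_continuous by (metis atLeast_iff)

lemma lam_integrable_Icc: "0 \<le> a \<Longrightarrow> lam integrable_on {a..b}"
  by (rule integrable_continuous_interval, rule continuous_on_subset[OF lam_cont]) auto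

lemma integral_lam_nonneg: "integral {0..t} lam \<ge> 0"
  using lam_integrable_Icc lam_nonneg by (intro integral_nonneg) auto

lemma lam_tendsto_0: "(lam \<longlongrightarrow> 0) at_top"
proof -
  have "((\<lambda>t. K - integral {0..t} k) \<longlongrightarrow> K - K) at_top"
    unfolding K_def using k_int k_nonneg by (intro tendsto_intros integral_Icc_tendsto_Ici) auto
  moreover have "\<forall>\<^sub>F t in at_top. K - integral {0..t} k = lam t"
    using K_split by (auto simp: eventually_at_top_linorder intro!: exI[of _ 0])
  ultimately show ?thesis by (simp add: tendsto_cong)
qed

lemma k_lower_bound: obtains c where "c > 0" "\<And>v. v \<in> {0..S} \<Longrightarrow> c \<le> k v"
proof (cases "S \<ge> 0")
  case True
  have "continuous_on {0..S} k" by (rule continuous_on_subset[OF k_cont]) auto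
  then obtain x where "x \<in> {0..S}" "\<And>y. y \<in> {0..S} \<Longrightarrow> k x \<le> k y"
    using continuous_attains_inf[of "{0..S}" k] True by auto
  with k_pos[of x] that show ?thesis by auto
qed (use that[of 1] in auto)

text \<open>Comparison of tail-weighted and kernel-weighted averages: a function that is
  nonnegative on \<open>[0, a]\<close> and not below \<open>-1\<close> on \<open>[a, t]\<close> has its \<open>\<lambda>\<close>-average over \<open>[0, S]\<close>
  controlled by its \<open>k\<close>-average over \<open>[0, t]\<close>, since \<open>\<lambda> \<le> K \<le> (K / c) k\<close> on \<open>[0, S]\<close>.\<close>
lemma tail_weighted_integral_le:
  assumes c: "c > 0" "\<And>v. v \<in> {0..S} \<Longrightarrow> c \<le> k v"
    and a: "0 \<le> S" "S \<le> a" "a \<le> t"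
    and E_cont: "continuous_on {0..t} E"
    and E_nonneg: "\<And>v. v \<in> {0..a} \<Longrightarrow> E v \<ge> 0"
    and E_lower: "\<And>v. v \<in> {a..t} \<Longrightarrow> E v \<ge> -1"
  shows "integral {0..S} (\<lambda>v. lam v * E v) \<le> K / c * (integral {0..t} (\<lambda>v. k v * E v) + lam a)"
proof -
  have kE_int: "(\<lambda>v. k v * E v) integrable_on {x..y}" if "0 \<le> x" "y \<le> t" for x y
    using that by (intro integrable_continuous_interval continuous_intros
                     continuous_on_subset[OF k_cont] continuous_on_subset[OF E_cont]) auto
  have "integral {0..S} (\<lambda>v. k v * E v) + integral {S..a} (\<lambda>v. k v * E v)
          + integral {a..t} (\<lambda>v. k v * E v) = integral {0..t} (\<lambda>v. k v * E v)"
    using a kE_int by (simp add: Henstock_Kurzweil_Integration.integral_combine)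
  moreover have "integral {S..a} (\<lambda>v. k v * E v) \<ge> 0"
    using a E_nonneg k_nonneg kE_int by (intro integral_nonneg) auto
  moreover have "- k v \<le> k v * E v" if "v \<in> {a..t}" for v
    using mult_left_mono[OF E_lower[OF that], of "k v"] k_nonneg[of v] that a by simp
  hence "integral {a..t} (\<lambda>v. k v * E v) \<ge> integral {a..t} (\<lambda>v. - k v)"
    using a kE_int k_integrable_Icc[of a t] by (intro integral_le integrable_neg) auto
  moreover have "integral {a..t} k \<le> lam a" using a by (intro integral_k_le_lam) auto
  ultimately have kE: "integral {0..S} (\<lambda>v. k v * E v) \<le> integral {0..t} (\<lambda>v. k v * E v) + lam a"
    by simp
  have "lam v * E v \<le> K / c * (k v * E v)" if v: "v \<in> {0..S}" for v
  proof -
    have "lam v \<le> K / c * c" using lam_le_K[of v] v c by simp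
    also have "\<dots> \<le> K / c * k v" using c K_nonneg v by (intro mult_left_mono) auto
    finally have "lam v * E v \<le> (K / c * k v) * E v"
      using E_nonneg[of v] v a by (intro mult_right_mono) auto
    thus ?thesis by simp
  qed
  hence "integral {0..S} (\<lambda>v. lam v * E v) \<le> integral {0..S} (\<lambda>v. K / c * (k v * E v))"
    using a by (intro integral_le integrable_continuous_interval continuous_intros
          continuous_on_subset[OF lam_cont] continuous_on_subset[OF k_cont]
          continuous_on_subset[OF E_cont]) auto
  also have "\<dots> = K / c * integral {0..S} (\<lambda>v. k v * E v)" by simp
  also have "\<dots> \<le> K / c * (integral {0..t} (\<lambda>v. k v * E v) + lam a)"
    using kE K_nonneg c by (intro mult_left_mono) auto
  finally show ?thesis .
qed

end

section \<open>Regularly varying tail: integrability and the first moment\<close>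

locale regular_tail = kernel +
  fixes \<alpha> :: real and L :: "real \<Rightarrow> real"
  assumes alpha: "\<alpha> > 1"
    and L_sv: "slowly_varying L"
    and tail: "\<forall>t>0. integral {t..} k = L t * t powr (- \<alpha>)"
begin

text \<open>Any exponent strictly between \<open>1\<close> and \<open>\<alpha>\<close> dominates the tail; we fix the midpoint.\<close>
definition \<gamma> :: real where "\<gamma> = (1 + \<alpha>) / 2"

lemma gamma_bounds: "1 < \<gamma>" "\<gamma> < \<alpha>"
  using alpha by (auto simp: \<gamma>_def)

lemma lam_pos: "t > 0 \<Longrightarrow> lam t > 0"
  using tail L_sv unfolding lam_def slowly_varying_def by auto

lemma lam_doubling_ratio: "((\<lambda>t. lam (2 * t) / lam t) \<longlongrightarrow> 2 powr (- \<alpha>)) at_top"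
proof -
  have "((\<lambda>t. L (2 * t) / L t * 2 powr (- \<alpha>)) \<longlongrightarrow> 1 * 2 powr (- \<alpha>)) at_top"
    using L_sv unfolding slowly_varying_def by (intro tendsto_intros) auto
  moreover have "L (2 * t) / L t * 2 powr (- \<alpha>) = lam (2 * t) / lam t" if "t \<ge> 1" for t
  proof -
    have "L t > 0" using L_sv that unfolding slowly_varying_def by auto
    thus ?thesis using tail that by (simp add: lam_def powr_mult field_simps)
  qed
  hence "\<forall>\<^sub>F t in at_top. L (2 * t) / L t * 2 powr (- \<alpha>) = lam (2 * t) / lam t"
    by (auto simp: eventually_at_top_linorder)
  ultimately show ?thesis by (simp add: tendsto_cong)
qed

lemma lam_power_bound:
  obtains T C where "T > 0" "C \<ge> 0" "\<And>t. t \<ge> T \<Longrightarrow> lam t \<le> C * t powr (- \<gamma>)"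
proof -
  have "2 powr (- \<alpha>) < 2 powr (- \<gamma>)" using gamma_bounds by simp
  from order_tendstoD(2)[OF lam_doubling_ratio this]
  obtain T0 where T0: "\<And>t. t \<ge> T0 \<Longrightarrow> lam (2 * t) / lam t < 2 powr (- \<gamma>)"
    by (auto simp: eventually_at_top_linorder)
  define T where "T = max T0 1"
  have T: "T > 0" by (simp add: T_def)
  have doubling: "lam (2 * t) \<le> 2 powr (- \<gamma>) * lam t" if "t \<ge> T" for t
    using T0[of t] lam_pos[of t] that by (simp add: T_def field_simps)
  have "lam t \<le> lam T * (2 * T) powr (- (- \<gamma>)) * t powr (- \<gamma>)" if "t \<ge> T" for t
    using T gamma_bounds lam_nonneg[of T] doubling lam_antimono[of T] that
    by (intro power_bound_from_doubling[of T "- \<gamma>" "lam T" lam]) auto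
  moreover have "lam T * (2 * T) powr (- (- \<gamma>)) \<ge> 0" using lam_nonneg T by simp
  ultimately show ?thesis using that T by blast
qed

text \<open>The tail is integrable, by comparison with \<open>t^(-\<gamma>)\<close> beyond \<open>T\<close>.\<close>
lemma lam_integrable: "lam integrable_on {0..}"
proof -
  obtain T C where T: "T > 0" "C \<ge> 0" and bound: "\<And>t. t \<ge> T \<Longrightarrow> lam t \<le> C * t powr (- \<gamma>)"
    using lam_power_bound by blast
  have "(\<lambda>x. x powr (- \<gamma>)) integrable_on {T..}"
    using has_integral_powr_to_inf[of "- \<gamma>" T] gamma_bounds T by auto
  from integrable_on_cmult_left[OF this, of C]
  have majorant: "(\<lambda>x. C * x powr (- \<gamma>)) integrable_on {T..}" by simp
  have "lam absolutely_integrable_on {T..}"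
  proof (rule measurable_bounded_by_integrable_imp_absolutely_integrable[OF _ _ majorant])
    show "lam \<in> borel_measurable (lebesgue_on {T..})"
      using T by (intro continuous_imp_measurable_on_sets_lebesgue continuous_on_subset[OF lam_cont]) auto
    show "norm (lam x) \<le> C * x powr (- \<gamma>)" if "x \<in> {T..}" for x
      using bound[of x] lam_nonneg[of x] that T by auto
  qed simp
  hence "lam integrable_on {T..}" by (simp add: absolutely_integrable_on_def)
  moreover have "lam integrable_on {0..T}" by (rule lam_integrable_Icc) simp
  moreover have "negligible ({0..T} \<inter> {T..})" "{0..} = {0..T} \<union> {T..}" using T by auto
  ultimately show ?thesis using integrable_Un by metis
qed

text \<open>The mean \<open>\<mu>\<close> of the tail, which will turn out to be the first moment of \<open>k\<close>.\<close>
definition \<mu> :: real where "\<mu> = integral {0..} lam"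

lemma integral_lam_tendsto: "((\<lambda>y. integral {0..y} lam) \<longlongrightarrow> \<mu>) at_top"
  unfolding \<mu>_def using lam_integrable lam_nonneg by (rule integral_Icc_tendsto_Ici)

lemma integral_lam_le_mu: "integral {0..t} lam \<le> \<mu>"
  unfolding \<mu>_def
  by (rule integral_subset_le) (use lam_integrable lam_integrable_Icc lam_nonneg in auto)

text \<open>Since \<open>\<gamma> > 1\<close>, even \<open>t \<lambda>(t) = O(t^(1 - \<gamma>))\<close> vanishes at infinity.\<close>
lemma t_lam_tendsto_0: "((\<lambda>t. t * lam t) \<longlongrightarrow> 0) at_top"
proof -
  obtain T C where T: "T > 0" "C \<ge> 0" and bound: "\<And>t. t \<ge> T \<Longrightarrow> lam t \<le> C * t powr (- \<gamma>)"
    using lam_power_bound by blast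
  have "1 - \<gamma> < 0" using gamma_bounds by simp
  hence "((\<lambda>t::real. t powr (1 - \<gamma>)) \<longlongrightarrow> 0) at_top"
    by (rule tendsto_neg_powr[OF _ filterlim_ident])
  hence majorant: "((\<lambda>t. C * t powr (1 - \<gamma>)) \<longlongrightarrow> 0) at_top"
    by (rule tendsto_mult_right_zero)
  show ?thesis
  proof (rule tendsto_sandwich[OF _ _ tendsto_const majorant])
    show "\<forall>\<^sub>F t in at_top. 0 \<le> t * lam t"
      using lam_nonneg by (intro eventually_at_top_linorderI[of 0] mult_nonneg_nonneg) auto
    have "t * lam t \<le> C * t powr (1 - \<gamma>)" if "t \<ge> T" for t
    proof -
      have t: "t > 0" using that T by simp
      have "t * lam t \<le> t * (C * t powr (- \<gamma>))" using bound[OF that] t by simp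
      also have "\<dots> = C * t powr (1 - \<gamma>)" using t by (simp add: powr_diff powr_minus field_simps)
      finally show ?thesis .
    qed
    thus "\<forall>\<^sub>F t in at_top. t * lam t \<le> C * t powr (1 - \<gamma>)"
      by (auto simp: eventually_at_top_linorder)
  qed
qed

text \<open>Integration by parts: \<open>\<integral>\<^sub>0\<^sup>y s k(s) ds = \<integral>\<^sub>0\<^sup>y \<lambda> - y \<lambda>(y)\<close>.\<close>
lemma first_moment_Icc:
  assumes "y \<ge> 0"
  shows "((\<lambda>s. s * k s) has_integral (integral {0..y} lam - y * lam y)) {0..y}"
proof -
  have "((\<lambda>s. s * k s) has_integral
          (integral {0..y} lam - y * lam y) - (integral {0..0} lam - 0 * lam 0)) {0..y}"
  proof (rule fundamental_theorem_of_calculus[OF assms])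
    fix x assume x: "x \<in> {0..y}"
    have "((\<lambda>s. integral {0..s} lam) has_real_derivative lam x) (at x within {0..y})"
      by (rule integral_has_real_derivative[OF continuous_on_subset[OF lam_cont] x]) auto
    moreover have "(lam has_real_derivative - k x) (at x within {0..y})"
      by (rule has_field_derivative_subset[OF lam_has_derivative]) (use x in auto)
    from DERIV_mult'[OF DERIV_ident this]
    have "((\<lambda>s. s * lam s) has_real_derivative 1 * lam x + x * (- k x)) (at x within {0..y})"
      by simp
    ultimately have "((\<lambda>s. integral {0..s} lam - s * lam s) has_real_derivative
                       lam x - (1 * lam x + x * (- k x))) (at x within {0..y})"
      by (rule DERIV_diff)
    thus "((\<lambda>s. integral {0..s} lam - s * lam s) has_vector_derivative x * k x) (at x within {0..y})"
      by (simp add: has_real_derivative_iff_has_vector_derivative[symmetric])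
  qed
  thus ?thesis by simp
qed

lemma first_moment: "((\<lambda>s. s * k s) has_integral \<mu>) {0..}"
proof (rule has_integral_to_inf)
  show "(\<lambda>s. s * k s) integrable_on {0..y}" for y
    by (intro integrable_continuous_interval continuous_intros continuous_on_subset[OF k_cont]) auto
  show "y \<ge> 0 \<Longrightarrow> y * k y \<ge> 0" for y using k_nonneg[of y] by simp
  have "((\<lambda>y. integral {0..y} lam - y * lam y) \<longlongrightarrow> \<mu> - 0) at_top"
    by (intro tendsto_intros integral_lam_tendsto t_lam_tendsto_0)
  moreover have "\<forall>\<^sub>F y in at_top. integral {0..y} lam - y * lam y = integral {0..y} (\<lambda>s. s * k s)"
    using integral_unique[OF first_moment_Icc]
    by (auto simp: eventually_at_top_linorder intro!: exI[of _ 0])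
  ultimately show "((\<lambda>y. integral {0..y} (\<lambda>s. s * k s)) \<longlongrightarrow> \<mu>) at_top"
    by (simp add: tendsto_cong)
qed

end

section \<open>The resolvent and the renewal equation\<close>

locale resolvent = kernel +
  fixes r :: "real \<Rightarrow> real"
  assumes r_cont: "continuous_on {0..} r"
    and r0: "r 0 = 1"
    and r_deriv: "\<And>t. t \<ge> 0 \<Longrightarrow> (r has_real_derivative
                    (- K * r t + integral {0..t} (\<lambda>s. k (t - s) * r s))) (at t within {0..})"
begin

definition r' :: "real \<Rightarrow> real" where
  "r' t = - K * r t + integral {0..t} (\<lambda>s. k (t - s) * r s)"

lemma r_has_derivative: "t \<ge> 0 \<Longrightarrow> (r has_real_derivative r' t) (at t within {0..})"
  unfolding r'_def by (rule r_deriv)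

text \<open>The renewal equation \<open>r + \<lambda> * r = 1\<close>: the derivative of \<open>\<lambda> * r\<close> is
  \<open>\<lambda>(0) r(t) + \<integral>\<^sub>0^t \<lambda>'(t - s) r(s) ds = K r(t) - (k * r)(t)\<close>, which cancels \<open>r'(t)\<close>.
  To differentiate under the integral, \<open>\<lambda>\<close> is represented on \<open>[-t, t]\<close> as \<open>K\<close> minus an
  antiderivative of \<open>k\<close>.\<close>
lemma renewal_identity:
  assumes t: "t \<ge> 0"
  shows "r t + integral {0..t} (\<lambda>s. lam (t - s) * r s) = 1"
proof -
  obtain F where F': "\<And>z. z \<in> {-t..t} \<Longrightarrow> (F has_real_derivative k (max 0 z)) (at z within {-t..t})"
    and F_eq: "\<And>z. z \<ge> 0 \<Longrightarrow> F z = integral {0..z} k"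
    using antiderivative_on_symmetric_interval[OF k_cont t] by blast
  define h where "h z = K - F z" for z
  have h_lam: "h z = lam z" if "z \<ge> 0" for z using K_split[OF that] F_eq[OF that] by (simp add: h_def)
  have h': "(h has_real_derivative - k (max 0 z)) (at z within {-t..t})" if "z \<in> {-t..t}" for z
    unfolding h_def using F'[OF that] by (auto intro!: derivative_eq_intros)
  have "continuous_on {-t..t} (\<lambda>z::real. max 0 z)" by (intro continuous_intros)
  hence h'_cont: "continuous_on {-t..t} (\<lambda>z. - k (max 0 z))"
    by (intro continuous_on_minus continuous_on_compose2[OF k_cont]) auto
  define \<Phi> where "\<Phi> \<tau> = r \<tau> + integral {0..\<tau>} (\<lambda>s. h (\<tau> - s) * r s)" for \<tau>
  have "(\<Phi> has_real_derivative 0) (at x within {0..t})" if x: "x \<in> {0..t}" for x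
  proof -
    have "((\<lambda>\<tau>. integral {0..\<tau>} (\<lambda>s. h (\<tau> - s) * r s)) has_real_derivative
            h 0 * r x + integral {0..x} (\<lambda>s. - k (max 0 (x - s)) * r s)) (at x within {0..t})"
      using x by (intro convolution_has_real_derivative h' h'_cont continuous_on_subset[OF r_cont]) auto
    moreover have "integral {0..x} (\<lambda>s. - k (max 0 (x - s)) * r s) = - integral {0..x} (\<lambda>s. k (x - s) * r s)"
      by (subst integral_neg[symmetric], rule integral_cong) auto
    moreover have "h 0 = K" by (simp add: h_def F_eq)
    ultimately have conv: "((\<lambda>\<tau>. integral {0..\<tau>} (\<lambda>s. h (\<tau> - s) * r s)) has_real_derivative
            K * r x - integral {0..x} (\<lambda>s. k (x - s) * r s)) (at x within {0..t})"
      by simp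
    have "(r has_real_derivative r' x) (at x within {0..t})"
      using x by (intro has_field_derivative_subset[OF r_has_derivative]) auto
    from DERIV_add[OF this conv]
    have "(\<Phi> has_real_derivative r' x + (K * r x - integral {0..x} (\<lambda>s. k (x - s) * r s)))
            (at x within {0..t})"
      unfolding \<Phi>_def .
    thus ?thesis by (simp add: r'_def)
  qed
  then obtain c where "\<forall>x\<in>{0..t}. \<Phi> x = c" using has_field_derivative_zero_constant[of "{0..t}" \<Phi>] by auto
  hence "\<Phi> t = \<Phi> 0" using t by auto
  also have "\<Phi> 0 = 1" by (simp add: \<Phi>_def r0)
  also have "\<Phi> t = r t + integral {0..t} (\<lambda>s. lam (t - s) * r s)"
    unfolding \<Phi>_def by (auto intro!: integral_cong simp: h_lam)
  finally show ?thesis .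
qed

lemma renewal_identity_reflected:
  assumes "t \<ge> 0"
  shows "r t + integral {0..t} (\<lambda>v. lam v * r (t - v)) = 1"
  using renewal_identity[OF assms] integral_reflect_Icc[of t "\<lambda>v. lam v * r (t - v)"] by simp

text \<open>The resolvent stays positive: at a first zero \<open>t\<^sub>1\<close> the slope \<open>(k * r)(t\<^sub>1)\<close> would be
  positive, so \<open>r\<close> would be negative just before \<open>t\<^sub>1\<close>.\<close>
lemma r_pos: "t \<ge> 0 \<Longrightarrow> r t > 0"
proof (rule ccontr)
  assume "t \<ge> 0" "\<not> r t > 0"
  moreover have "r 0 > 0" by (simp add: r0)
  ultimately obtain t1 where t1: "t1 > 0" "r t1 = 0"
    and before: "\<And>s. 0 \<le> s \<Longrightarrow> s < t1 \<Longrightarrow> r s > 0"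
    using first_zero[OF r_cont, of t] by (metis not_less)
  define f where "f = (\<lambda>s. k (t1 - s) * r s)"
  have f_cont: "continuous_on {0..t1} f"
    unfolding f_def by (intro continuous_intros continuous_on_reflect_Icc k_cont
                         continuous_on_subset[OF r_cont]) auto
  have f_nonneg: "f s \<ge> 0" if "s \<in> {0..t1}" for s
    using before[of s] t1 k_nonneg[of "t1 - s"] that by (cases "s = t1") (auto simp: f_def)
  have "f 0 \<noteq> 0" using k_pos[of t1] t1 r0 by (simp add: f_def)
  moreover have "0 \<in> {0..t1}" using t1 by simp
  ultimately have "integral {0..t1} f \<noteq> 0" using integral_eq_0_iff[OF f_cont t1(1) f_nonneg] by blast
  moreover have "integral {0..t1} f \<ge> 0"
    using f_nonneg by (intro integral_nonneg integrable_continuous_interval f_cont) auto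
  ultimately have "r' t1 > 0" using t1 by (simp add: r'_def f_def)
  then obtain d where d: "d > 0" "\<And>h. h > 0 \<Longrightarrow> t1 - h \<in> {0..} \<Longrightarrow> h < d \<Longrightarrow> r (t1 - h) < r t1"
    using has_real_derivative_pos_inc_left[OF r_has_derivative] t1 by (metis less_imp_le)
  define h where "h = min d t1 / 2"
  have "h > 0" "h < d" "t1 - h \<in> {0..}" "t1 - h < t1" using d t1 by (auto simp: h_def min_def)
  with d(2)[of h] before[of "t1 - h"] t1 show False by auto
qed

text \<open>By the renewal equation and positivity, \<open>r \<le> 1\<close>.\<close>
lemma r_le_1: "t \<ge> 0 \<Longrightarrow> r t \<le> 1"
proof -
  assume t: "t \<ge> 0"
  have "lam (t - s) * r s \<ge> 0" if "s \<in> {0..t}" for s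
    using lam_nonneg[of "t - s"] r_pos[of s] that by simp
  hence "integral {0..t} (\<lambda>s. lam (t - s) * r s) \<ge> 0"
    by (intro integral_nonneg integrable_continuous_interval continuous_intros
          continuous_on_reflect_Icc lam_cont continuous_on_subset[OF r_cont]) auto
  thus ?thesis using renewal_identity[OF t] by linarith
qed

lemma r'_eq:
  assumes t: "t \<ge> 0"
  shows "r' t = - lam t * r t + integral {0..t} (\<lambda>v. k v * (r (t - v) - r t))"
proof -
  have "(\<lambda>v. k v * r (t - v)) integrable_on {0..t}"
    by (intro integrable_continuous_interval continuous_intros continuous_on_subset[OF k_cont]
          continuous_on_reflect_Icc r_cont) auto
  moreover have "(\<lambda>v. r t * k v) integrable_on {0..t}"
    using integrable_on_cmult_left[OF k_integrable_Icc[of 0 t]] by simp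
  ultimately have "integral {0..t} (\<lambda>v. k v * (r (t - v) - r t))
                     = integral {0..t} (\<lambda>v. k v * r (t - v)) - r t * integral {0..t} k"
    by (simp add: algebra_simps integral_diff)
  also have "integral {0..t} (\<lambda>v. k v * r (t - v)) = integral {0..t} (\<lambda>s. k (t - s) * r s)"
    using integral_reflect_Icc[of t "\<lambda>s. k (t - s) * r s"] by simp
  finally show ?thesis using K_split[OF t] by (simp add: r'_def algebra_simps)
qed

text \<open>At a time where \<open>\<sigma> r\<close> has slope at least \<open>-2\<delta>\<close> and the tail \<open>\<lambda>(t)\<close> is below \<open>\<delta>\<close>,
  the \<open>k\<close>-average of the excess \<open>\<sigma> (r(t) - r(t - v)) + 2\<delta>\<close> of \<open>\<sigma> r\<close> over its past is at most
  \<open>(3 + 2K) \<delta>\<close>: by the slope formula it equals \<open>-\<sigma> (r'(t) + \<lambda>(t) r(t)) + 2\<delta> \<integral>\<^sub>0\<^sup>t k\<close>.\<close>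
lemma slope_bounds_kernel_average:
  assumes \<sigma>: "\<bar>\<sigma>\<bar> = 1" and t: "t \<ge> 0" and \<delta>: "\<delta> > 0" and lam_t: "lam t \<le> \<delta>"
    and slope: "\<sigma> * r' t \<ge> - 2 * \<delta>"
  shows "integral {0..t} (\<lambda>v. k v * (\<sigma> * (r t - r (t - v)) + 2 * \<delta>)) \<le> (3 + 2 * K) * \<delta>"
proof -
  have "integral {0..t} (\<lambda>v. k v * (\<sigma> * (r t - r (t - v))))
          = integral {0..t} (\<lambda>v. - \<sigma> * (k v * (r (t - v) - r t)))"
    by (rule integral_cong) (simp add: algebra_simps)
  also have "\<dots> = - \<sigma> * (r' t + lam t * r t)"
    using r'_eq[OF t] by simp
  finally have increments: "integral {0..t} (\<lambda>v. k v * (\<sigma> * (r t - r (t - v))))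
                              = - (\<sigma> * r' t) - \<sigma> * (lam t * r t)"
    by (simp add: algebra_simps)
  have "- \<sigma> * (lam t * r t) \<le> 1 * (lam t * r t)"
    using \<sigma> lam_nonneg[OF t] r_pos[OF t] by (intro mult_right_mono) (auto simp: abs_if split: if_splits)
  also have "\<dots> \<le> \<delta>"
    using mult_left_mono[OF r_le_1[OF t] lam_nonneg[OF t]] lam_t by simp
  finally have "integral {0..t} (\<lambda>v. k v * (\<sigma> * (r t - r (t - v)))) \<le> 3 * \<delta>"
    using increments slope by simp
  moreover have "2 * \<delta> * integral {0..t} k \<le> 2 * \<delta> * K"
    using integral_k_le_K[OF t] \<delta> by (intro mult_left_mono) auto
  moreover have "(\<lambda>v. k v * (\<sigma> * (r t - r (t - v)))) integrable_on {0..t}"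
    by (intro integrable_continuous_interval continuous_intros continuous_on_reflect_Icc r_cont
          continuous_on_subset[OF k_cont]) auto
  ultimately show ?thesis
    using integral_mult_add_const[OF _ k_integrable_Icc[of 0 t], of "\<lambda>v. \<sigma> * (r t - r (t - v))" "2 * \<delta>"]
    by (simp add: algebra_simps)
qed

lemma near_extremum_estimate:
  assumes \<sigma>: "\<bar>\<sigma>\<bar> = 1" and c: "c > 0" "\<And>v. v \<in> {0..S} \<Longrightarrow> c \<le> k v"
    and \<delta>: "\<delta> > 0" and S: "S \<ge> 0" and T0: "T0 \<ge> 0" and t: "t \<ge> T0 + S"
    and lam_small: "lam (t - T0) \<le> \<delta>"
    and near_max: "\<And>u. u \<ge> T0 \<Longrightarrow> \<sigma> * r u \<le> \<sigma> * r t + 2 * \<delta>"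
    and slope: "\<sigma> * r' t \<ge> - 2 * \<delta>"
  shows "integral {0..S} (\<lambda>v. lam v * (\<sigma> * (r t - r (t - v)))) \<le> K / c * (4 + 2 * K) * \<delta>"
proof -
  define E where "E v = \<sigma> * (r t - r (t - v)) + 2 * \<delta>" for v
  have t0: "t \<ge> 0" using t T0 S by linarith
  have r_back: "continuous_on {0..t} (\<lambda>v. r (t - v))" by (rule continuous_on_reflect_Icc[OF r_cont])
  have E_cont: "continuous_on {0..t} E" unfolding E_def by (intro continuous_intros r_back)
  have E_nonneg: "E v \<ge> 0" if "v \<in> {0..t - T0}" for v
    using near_max[of "t - v"] that by (simp add: E_def right_diff_distrib)
  have E_lower: "E v \<ge> -1" if "v \<in> {t - T0..t}" for v
  proof -
    have "\<bar>r t - r (t - v)\<bar> \<le> 1"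
      using r_pos[OF t0] r_le_1[OF t0] r_pos[of "t - v"] r_le_1[of "t - v"] that by auto
    hence "\<bar>\<sigma> * (r t - r (t - v))\<bar> \<le> 1" using \<sigma> by (simp add: abs_mult)
    thus ?thesis using \<delta> by (simp add: E_def abs_le_iff)
  qed
  have lam_t: "lam t \<le> \<delta>" using lam_antimono[of "t - T0" t] lam_small t T0 S by linarith
  have "integral {0..t} (\<lambda>v. k v * E v) + lam (t - T0) \<le> (4 + 2 * K) * \<delta>"
    using slope_bounds_kernel_average[OF \<sigma> t0 \<delta> lam_t slope] lam_small
    by (simp add: E_def algebra_simps)
  hence "K / c * (integral {0..t} (\<lambda>v. k v * E v) + lam (t - T0)) \<le> K / c * ((4 + 2 * K) * \<delta>)"
    using K_nonneg c by (intro mult_left_mono) auto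
  moreover have "integral {0..S} (\<lambda>v. lam v * E v)
                   \<le> K / c * (integral {0..t} (\<lambda>v. k v * E v) + lam (t - T0))"
    using t S T0 by (intro tail_weighted_integral_le c E_cont E_nonneg E_lower) auto
  moreover have "(\<lambda>v. lam v * (\<sigma> * (r t - r (t - v)))) integrable_on {0..S}"
    using t T0 by (intro integrable_continuous_interval continuous_intros continuous_on_subset[OF r_back]
                    continuous_on_subset[OF lam_cont]) auto
  hence "integral {0..S} (\<lambda>v. lam v * E v)
           = integral {0..S} (\<lambda>v. lam v * (\<sigma> * (r t - r (t - v)))) + 2 * \<delta> * integral {0..S} lam"
    unfolding E_def by (rule integral_mult_add_const[OF _ lam_integrable_Icc]) simp
  moreover have "2 * \<delta> * integral {0..S} lam \<ge> 0" using \<delta> integral_lam_nonneg by simp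
  ultimately show ?thesis by (simp add: algebra_simps)
qed

lemma near_extremal_time:
  assumes M: "limsup_at_top (\<lambda>t. \<sigma> * r t) M" and \<delta>: "\<delta> > 0"
  obtains T0 t where "T0 \<ge> 0" "t \<ge> T0 + T" "\<sigma> * r t > M - \<delta> / 2" "\<sigma> * r' t \<ge> - 2 * \<delta>"
    "\<And>u. u \<ge> T0 \<Longrightarrow> \<sigma> * r u \<le> \<sigma> * r t + 2 * \<delta>"
proof -
  obtain T0 where T0: "T0 \<ge> 0" "\<And>t. t \<ge> T0 \<Longrightarrow> \<sigma> * r t \<le> M + \<delta>"
    using M \<delta> unfolding limsup_at_top_def by blast
  have often: "\<exists>t\<ge>T. \<sigma> * r t > M - \<delta> / 2" for T
    using M \<delta> unfolding limsup_at_top_def by simp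
  have deriv: "((\<lambda>t. \<sigma> * r t) has_real_derivative \<sigma> * r' t) (at t within {0..})" if "t \<ge> 0" for t
    using that by (intro DERIV_cmult r_has_derivative)
  obtain t where t: "t \<ge> T0 + T" "\<sigma> * r t > M - \<delta> / 2" "\<sigma> * r' t \<ge> - 2 * \<delta>"
    using approximate_maximum[where f="\<lambda>t. \<sigma> * r t" and D="\<lambda>t. \<sigma> * r' t",
            OF deriv T0(1) T0(2) \<delta> often] by blast
  moreover have "\<sigma> * r u \<le> \<sigma> * r t + 2 * \<delta>" if "u \<ge> T0" for u
    using T0(2)[OF that] t(2) \<delta> by linarith
  ultimately show ?thesis using that T0(1) by blast
qed

lemma renewal_split:
  assumes S: "0 \<le> S" "S \<le> t"
  shows "r t * (1 + integral {0..S} lam) - 1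
           = integral {0..S} (\<lambda>v. lam v * (r t - r (t - v))) - integral {S..t} (\<lambda>v. lam v * r (t - v))"
proof -
  have int: "(\<lambda>v. lam v * r (t - v)) integrable_on {a..b}" if "0 \<le> a" "b \<le> t" for a b
    using that by (intro integrable_continuous_interval continuous_intros continuous_on_subset[OF lam_cont]
                     continuous_on_subset[OF continuous_on_reflect_Icc[OF r_cont]]) auto
  have "integral {0..S} (\<lambda>v. lam v * r (t - v)) + integral {S..t} (\<lambda>v. lam v * r (t - v))
          = integral {0..t} (\<lambda>v. lam v * r (t - v))"
    using S int by (intro Henstock_Kurzweil_Integration.integral_combine) auto
  hence "1 = r t + integral {0..S} (\<lambda>v. lam v * r (t - v)) + integral {S..t} (\<lambda>v. lam v * r (t - v))"
    using renewal_identity_reflected[of t] S by simp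
  moreover have "integral {0..S} (\<lambda>v. lam v * (r t - r (t - v)))
                   = integral {0..S} (\<lambda>v. r t * lam v - lam v * r (t - v))"
    by (rule integral_cong) (simp add: algebra_simps)
  moreover have "\<dots> = r t * integral {0..S} lam - integral {0..S} (\<lambda>v. lam v * r (t - v))"
    using int[of 0 S] integrable_on_cmult_left[OF lam_integrable_Icc[of 0 S], of "r t"] S
    by (simp add: integral_diff)
  ultimately show ?thesis by (simp add: algebra_simps)
qed

lemma renewal_remainder_bounds:
  assumes S: "0 \<le> S" "S \<le> t"
  shows "0 \<le> integral {S..t} (\<lambda>v. lam v * r (t - v))"
    and "integral {S..t} (\<lambda>v. lam v * r (t - v)) \<le> integral {0..t} lam - integral {0..S} lam"
proof -
  have int: "(\<lambda>v. lam v * r (t - v)) integrable_on {S..t}"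
    using S by (intro integrable_continuous_interval continuous_intros continuous_on_subset[OF lam_cont]
                  continuous_on_subset[OF continuous_on_reflect_Icc[OF r_cont]]) auto
  have bounds: "0 \<le> lam v * r (t - v)" "lam v * r (t - v) \<le> lam v" if "v \<in> {S..t}" for v
  proof -
    have "0 \<le> lam v" "0 < r (t - v)" "r (t - v) \<le> 1" using that S lam_nonneg r_pos r_le_1 by auto
    thus "0 \<le> lam v * r (t - v)" "lam v * r (t - v) \<le> lam v"
      using mult_left_mono[of "r (t - v)" 1 "lam v"] by auto
  qed
  show "0 \<le> integral {S..t} (\<lambda>v. lam v * r (t - v))"
    using int bounds(1) by (rule integral_nonneg)
  have "integral {S..t} (\<lambda>v. lam v * r (t - v)) \<le> integral {S..t} lam"
    using int bounds(2) lam_integrable_Icc S by (intro integral_le) auto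
  moreover have "integral {0..S} lam + integral {S..t} lam = integral {0..t} lam"
    using S lam_integrable_Icc by (intro Henstock_Kurzweil_Integration.integral_combine) auto
  ultimately show "integral {S..t} (\<lambda>v. lam v * r (t - v)) \<le> integral {0..t} lam - integral {0..S} lam"
    by linarith
qed

end

section \<open>The limit of the resolvent\<close>

locale resolvent_regular = regular_tail + resolvent
begin

lemma mu_nonneg: "\<mu> \<ge> 0"
  using integral_lam_le_mu integral_lam_nonneg order_trans by blast

text \<open>Key inequality for a fixed window length \<open>S\<close>, up to the tail mass beyond \<open>S\<close>:
  combine a near-extremal time with the central estimate and the split renewal identity,
  then let \<open>\<delta> \<rightarrow> 0\<close>.\<close>
lemma limsup_estimate_at:
  assumes \<sigma>: "\<bar>\<sigma>\<bar> = 1" and M: "limsup_at_top (\<lambda>t. \<sigma> * r t) M" and S: "S \<ge> 0"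
  shows "M * (1 + integral {0..S} lam) - \<sigma> \<le> \<mu> - integral {0..S} lam"
proof -
  obtain c where c: "c > 0" "\<And>v. v \<in> {0..S} \<Longrightarrow> c \<le> k v" using k_lower_bound by blast
  define \<Lambda> where "\<Lambda> = integral {0..S} lam"
  define Q where "Q = K / c * (4 + 2 * K)"
  have err: "M * (1 + \<Lambda>) - \<sigma> \<le> \<mu> - \<Lambda> + (Q + (1 + \<Lambda>) / 2) * \<delta>" if \<delta>: "\<delta> > 0" for \<delta>
  proof -
    obtain T1 where T1: "\<And>u. u \<ge> T1 \<Longrightarrow> lam u \<le> \<delta>"
      using order_tendstoD(2)[OF lam_tendsto_0 \<delta>] unfolding eventually_at_top_linorder
      by (meson less_imp_le)
    obtain T0 t where T0: "T0 \<ge> 0" and t: "t \<ge> T0 + (S + max T1 0)" "\<sigma> * r t > M - \<delta> / 2"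
      "\<sigma> * r' t \<ge> - 2 * \<delta>" "\<And>u. u \<ge> T0 \<Longrightarrow> \<sigma> * r u \<le> \<sigma> * r t + 2 * \<delta>"
      using near_extremal_time[OF M \<delta>] by blast
    have St: "0 \<le> S" "S \<le> t" using t S T0 by auto
    have "lam (t - T0) \<le> \<delta>" using t(1) S max.cobounded1[of T1 0] by (intro T1) linarith
    with near_extremum_estimate[OF \<sigma> c \<delta> S T0] t
    have "integral {0..S} (\<lambda>v. lam v * (\<sigma> * (r t - r (t - v)))) \<le> Q * \<delta>"
      by (auto simp: Q_def)
    moreover have "integral {0..S} (\<lambda>v. lam v * (\<sigma> * (r t - r (t - v))))
                     = \<sigma> * integral {0..S} (\<lambda>v. lam v * (r t - r (t - v)))"
      by (simp flip: integral_mult_right add: algebra_simps)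
    ultimately have increment: "\<sigma> * integral {0..S} (\<lambda>v. lam v * (r t - r (t - v))) \<le> Q * \<delta>"
      by simp
    define R where "R = integral {S..t} (\<lambda>v. lam v * r (t - v))"
    have R: "0 \<le> R" "R \<le> \<mu> - \<Lambda>"
      using renewal_remainder_bounds[OF St] integral_lam_le_mu[of t] by (auto simp: R_def \<Lambda>_def)
    have "- \<sigma> * R \<le> R" using \<sigma> R(1) by (auto simp: abs_if split: if_splits)
    moreover have "\<sigma> * (r t * (1 + \<Lambda>)) - \<sigma>
                     = \<sigma> * integral {0..S} (\<lambda>v. lam v * (r t - r (t - v))) - \<sigma> * R"
      using arg_cong[OF renewal_split[OF St], of "\<lambda>x. \<sigma> * x"]
      by (simp add: R_def \<Lambda>_def algebra_simps)
    moreover have "(M - \<delta> / 2) * (1 + \<Lambda>) \<le> \<sigma> * r t * (1 + \<Lambda>)"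
      using t(2) integral_lam_nonneg by (intro mult_right_mono) (auto simp: \<Lambda>_def)
    moreover have "(Q + (1 + \<Lambda>) / 2) * \<delta> = Q * \<delta> + \<delta> / 2 * (1 + \<Lambda>)"
      by (simp add: algebra_simps)
    ultimately show ?thesis using increment R(2) by (simp add: left_diff_distrib mult.assoc)
  qed
  have "Q \<ge> 0" using K_nonneg c by (simp add: Q_def)
  moreover have "\<Lambda> \<ge> 0" using integral_lam_nonneg by (simp add: \<Lambda>_def)
  ultimately have "Q + (1 + \<Lambda>) / 2 \<ge> 0" by simp
  from le_by_vanishing_error[OF err this] show ?thesis by (simp add: \<Lambda>_def)
qed

text \<open>Letting \<open>S \<rightarrow> \<infinity>\<close>: the limit superior of \<open>\<sigma> r\<close> satisfies \<open>M (1 + \<mu>) \<le> \<sigma>\<close>.\<close>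
lemma limsup_estimate:
  assumes \<sigma>: "\<bar>\<sigma>\<bar> = 1" and M: "limsup_at_top (\<lambda>t. \<sigma> * r t) M"
  shows "M * (1 + \<mu>) \<le> \<sigma>"
proof -
  have "((\<lambda>S. M * (1 + integral {0..S} lam) - \<sigma> - (\<mu> - integral {0..S} lam)) \<longlongrightarrow>
          M * (1 + \<mu>) - \<sigma> - (\<mu> - \<mu>)) at_top"
    by (intro tendsto_intros integral_lam_tendsto)
  moreover have "\<forall>\<^sub>F S in at_top. M * (1 + integral {0..S} lam) - \<sigma> - (\<mu> - integral {0..S} lam) \<le> 0"
    using limsup_estimate_at[OF \<sigma> M] by (intro eventually_at_top_linorderI[of 0]) auto
  ultimately have "M * (1 + \<mu>) - \<sigma> - (\<mu> - \<mu>) \<le> 0" by (rule tendsto_upperbound) simp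
  thus ?thesis by simp
qed

theorem r_tendsto: "(r \<longlongrightarrow> 1 / (1 + \<mu>)) at_top"
proof -
  have bound: "\<bar>\<sigma> * r t\<bar> \<le> 1" if "\<bar>\<sigma>\<bar> = 1" "t \<ge> 0" for \<sigma> t
    using that r_pos[of t] r_le_1[of t] by (simp add: abs_mult)
  obtain M where M: "limsup_at_top (\<lambda>t. 1 * r t) M"
    using bounded_has_limsup_at_top[of "\<lambda>t. 1 * r t" 1] bound[of 1] by auto
  obtain M' where M': "limsup_at_top (\<lambda>t. -1 * r t) M'"
    using bounded_has_limsup_at_top[of "\<lambda>t. -1 * r t" 1] bound[of "-1"] by auto
  have "1 + \<mu> > 0" using mu_nonneg by simp
  hence "M \<le> 1 / (1 + \<mu>)" "M' \<le> - (1 / (1 + \<mu>))"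
    using limsup_estimate[OF _ M] limsup_estimate[OF _ M'] by (simp_all add: field_simps)
  with M M' show ?thesis by (intro tendsto_by_limsup_bounds) auto
qed

end

theorem corollary3p2:
  fixes k L r :: "real \<Rightarrow> real" and \<alpha> a :: real
  assumes k_int: "k integrable_on {0..}"
    and k_cont: "continuous_on {0..} k"
    and k_pos: "\<forall>t\<ge>0. k t > 0"
    and alpha: "\<alpha> > 1"
    and L_sv: "slowly_varying L"
    and tail: "\<forall>t>0. integral {t..} k = L t * t powr (- \<alpha>)"
    and a_def: "a = - integral {0..} k"
    and r_cont: "continuous_on {0..} r"
    and r0: "r 0 = 1"
    and r_eq: "\<forall>t\<ge>0. (r has_real_derivative
                 (a * r t + integral {0..t} (\<lambda>s. k (t - s) * r s))) (at t within {0..})"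
  shows "(\<lambda>s. s * k s) integrable_on {0..}
         \<and> (r \<longlongrightarrow> 1 / (1 + integral {0..} (\<lambda>s. s * k s))) at_top"
proof -
  interpret kernel k
    using k_cont k_pos k_int by unfold_locales auto
  interpret resolvent_regular k \<alpha> L r
    using alpha L_sv tail r_cont r0 r_eq by unfold_locales (auto simp: a_def K_def)
  have "(\<lambda>s. s * k s) integrable_on {0..}" "integral {0..} (\<lambda>s. s * k s) = \<mu>"
    using first_moment by (auto simp: integrable_on_def integral_unique)
  with r_tendsto show ?thesis by simp
qed

end
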